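(* Let $A$ be a Banach algebra and let $(C^*_{cont}(A;A),b)$ be its continuous Hochschild cochain complex. Suppose there are continuous linear maps $h:C^2_{cont}(A;A)\to C^1_{cont}(A;A)$ and $g:C^3_{cont}(A;A)\to C^2_{cont}(A;A)$ with $bh+gb=1$ on $C^2_{cont}(A;A)$. Then every continuous deformation of $A$ which is of class $C^1$ in $t$ is equivalent to the trivial one: there exist $\epsilon>0$ and continuous algebra isomorphisms $h_t$ between $(A,\cdot)$ and $(A,\odot_t)$, $|t|<\epsilon$, of class $C^1$ in $t$, with $h_0=\mathrm{Id}$.
   Context: Continuity of multilinear maps is joint continuity (projective tensor product): $C^k_{cont}(A;A)$ is the Banach space of bounded $k$-linear maps $A^k\to A$, with Hochschild differential $b(\alpha)(a_0,\dots,a_k)=a_0\alpha(a_1,\dots,a_k)+\sum_{i=1}^k(-1)^i\alpha(a_0,\dots,a_{i-1}a_i,\dots,a_k)+(-1)^{k+1}\alpha(a_0,\dots,a_{k-1})a_k$. A continuous deformation of $A$ of class $C^1$ in $t$ is a family $\odot_t$, $t$ in an open interval containing $0$, of associative multiplications on $A$, each bounded bilinear, with $\odot_0$ the original multiplication, such that $t\mapsto\odot_t\in C^2_{cont}(A;A)$ is $C^1$. All maps are linear unless stated otherwise. *)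

theory Defs
  imports "HOL-Analysis.Analysis"
begin

text \<open>A bounded k-linear map A^k -> A is represented in curried form as an element of
  the Banach space  'a =>L ... =>L 'a  (isometric to the space of jointly bounded
  k-linear maps with the usual sup norm).\<close>

type_synonym 'a cochain1 = "'a \<Rightarrow>\<^sub>L 'a"
type_synonym 'a cochain2 = "'a \<Rightarrow>\<^sub>L 'a \<Rightarrow>\<^sub>L 'a"
type_synonym 'a cochain3 = "'a \<Rightarrow>\<^sub>L 'a \<Rightarrow>\<^sub>L 'a \<Rightarrow>\<^sub>L 'a"

definition hoch_b1 :: "('a::{real_normed_algebra,banach}) cochain1 \<Rightarrow> 'a cochain2" where
  "hoch_b1 \<alpha> = Blinfun (\<lambda>a0. Blinfun (\<lambda>a1.
      a0 * blinfun_apply \<alpha> a1 - blinfun_apply \<alpha> (a0 * a1) + blinfun_apply \<alpha> a0 * a1))"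

definition hoch_b2 :: "('a::{real_normed_algebra,banach}) cochain2 \<Rightarrow> 'a cochain3" where
  "hoch_b2 \<alpha> = Blinfun (\<lambda>a0. Blinfun (\<lambda>a1. Blinfun (\<lambda>a2.
      a0 * (\<alpha> a1 a2) - \<alpha> (a0 * a1) a2 + \<alpha> a0 (a1 * a2) - (\<alpha> a0 a1) * a2)))"

definition C1_deformation :: "real set \<Rightarrow> (real \<Rightarrow> ('a::{real_normed_algebra,banach}) cochain2) \<Rightarrow> bool" where
  "C1_deformation I m \<longleftrightarrow>
     open I \<and> is_interval I \<and> 0 \<in> I \<and>
     (\<forall>t\<in>I. \<forall>x y z. m t (m t x y) z = m t x (m t y z)) \<and>
     (\<forall>x y. m 0 x y = x * y) \<and>
     m C1_differentiable_on I"

end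

theory Submission
  imports Defs
begin

text \<open>Differentiating associativity of \<open>m t\<close> shows that the velocity \<open>D t = m' t\<close> is a
  Hochschild 2-cocycle for the product \<open>m t\<close>. For \<open>t\<close> near 0 the operator \<open>b h + g b\<close>, built
  from the Hochschild differential of \<open>m t\<close>, is a small perturbation of the identity, hence invertible
  by a Neumann series whose inverse preserves cocycles; so \<open>D t = b(Y t)\<close> for a 1-cochain \<open>Y t\<close>
  depending continuously on \<open>t\<close>. Solving the linear equation \<open>H' = H \<circ> Y\<close>, \<open>H 0 = id\<close> by
  Picard iteration gives operators close to the identity, hence bijective. The defect
  \<open>H t (m t x y) - H t x * H t y\<close> vanishes at 0 and satisfies a linear equation driven by \<open>Y\<close>,
  so it vanishes identically by a Gronwall-type iteration of the mean value inequality.\<close>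

definition blinfun_of_bilinear ::
    "('a::real_normed_vector \<Rightarrow> 'b::real_normed_vector \<Rightarrow> 'c::real_normed_vector) \<Rightarrow>
      'a \<Rightarrow>\<^sub>L 'b \<Rightarrow>\<^sub>L 'c" where
  "blinfun_of_bilinear f = Blinfun (\<lambda>x. Blinfun (f x))"

lemma bounded_bilinearI:
  fixes f :: "'a::real_normed_vector \<Rightarrow> 'b::real_normed_vector \<Rightarrow> 'c::real_normed_vector"
  assumes "\<And>a a' b. f (a + a') b = f a b + f a' b"
    and "\<And>a b b'. f a (b + b') = f a b + f a b'"
    and "\<And>r a b. f (r *\<^sub>R a) b = r *\<^sub>R f a b"
    and "\<And>r a b. f a (r *\<^sub>R b) = r *\<^sub>R f a b"
    and "\<And>a b. norm (f a b) \<le> K * norm a * norm b"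
  shows "bounded_bilinear f"
  by (rule bounded_bilinear.intro) (use assms in \<open>auto intro!: exI[of _ K] simp: ac_simps\<close>)

lemma blinfun_of_bilinear_apply:
  assumes "bounded_bilinear f"
  shows "blinfun_of_bilinear f x y = f x y"
proof -
  interpret bounded_bilinear f by fact
  have "bounded_linear (\<lambda>x. Blinfun (f x))"
    using bounded_linear_prod_right by (simp add: prod_right_def map_fun_def o_def)
  then show ?thesis
    by (simp add: blinfun_of_bilinear_def bounded_linear_Blinfun_apply bounded_linear_right)
qed

lemma norm_blinfun_of_bilinear_le:
  assumes "bounded_bilinear f" "0 \<le> K" "\<And>x y. norm (f x y) \<le> K * norm x * norm y"
  shows "norm (blinfun_of_bilinear f) \<le> K"
  using assms by (intro norm_blinfun_bound) (auto simp: blinfun_of_bilinear_apply)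

definition blinfun_of_trilinear ::
    "('a::real_normed_vector \<Rightarrow> 'b::real_normed_vector \<Rightarrow> 'c::real_normed_vector \<Rightarrow> 'd::real_normed_vector) \<Rightarrow>
      'a \<Rightarrow>\<^sub>L 'b \<Rightarrow>\<^sub>L 'c \<Rightarrow>\<^sub>L 'd" where
  "blinfun_of_trilinear f = Blinfun (\<lambda>x. blinfun_of_bilinear (f x))"

lemma blinfun_of_trilinear_apply:
  assumes bil: "\<And>x. bounded_bilinear (f x)"
    and add: "\<And>x x' y z. f (x + x') y z = f x y z + f x' y z"
    and scale: "\<And>r x y z. f (r *\<^sub>R x) y z = r *\<^sub>R f x y z"
    and bound: "\<And>x y z. norm (f x y z) \<le> K * norm x * norm y * norm z"
    and "0 \<le> K"
  shows "blinfun_of_trilinear f x y z = f x y z"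
proof -
  have norm2: "norm (blinfun_of_bilinear (f x)) \<le> K * norm x" for x
    by (rule norm_blinfun_of_bilinear_le[OF bil]) (use \<open>0 \<le> K\<close> bound in \<open>auto simp: ac_simps\<close>)
  have "bounded_linear (\<lambda>x. blinfun_of_bilinear (f x))"
  proof (rule bounded_linear_intro[where K=K])
    show "blinfun_of_bilinear (f (x + y)) = blinfun_of_bilinear (f x) + blinfun_of_bilinear (f y)" for x y
      by (auto intro!: blinfun_eqI simp: blinfun_of_bilinear_apply[OF bil] add blinfun.add_left)
    show "blinfun_of_bilinear (f (r *\<^sub>R x)) = r *\<^sub>R blinfun_of_bilinear (f x)" for r x
      by (auto intro!: blinfun_eqI simp: blinfun_of_bilinear_apply[OF bil] scale blinfun.scaleR_left)
    show "norm (blinfun_of_bilinear (f x)) \<le> norm x * K" for x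
      using norm2[of x] by (simp add: ac_simps)
  qed
  then show ?thesis
    by (simp add: blinfun_of_trilinear_def bounded_linear_Blinfun_apply blinfun_of_bilinear_apply[OF bil])
qed

lemma norm_blinfun_apply_apply_le:
  "norm (blinfun_apply (blinfun_apply \<mu> x) y) \<le> norm \<mu> * norm x * norm y"
  by (metis (no_types, lifting) mult.commute mult_left_mono norm_blinfun norm_ge_zero order_trans)

lemma has_vector_derivative_blinfun_apply:
  fixes f :: "real \<Rightarrow> 'a::real_normed_vector \<Rightarrow>\<^sub>L 'b::real_normed_vector"
  assumes "(f has_vector_derivative f') (at t within S)"
  shows "((\<lambda>s. f s x) has_vector_derivative f' x) (at t within S)"
  using blinfun.has_vector_derivative[OF assms has_vector_derivative_const] by simp

section \<open>Hochschild differentials of a bounded product\<close>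

definition hoch_b1_wrt :: "('a::real_normed_vector) cochain2 \<Rightarrow> 'a cochain1 \<Rightarrow> 'a cochain2" where
  "hoch_b1_wrt \<mu> \<alpha> = blinfun_of_bilinear (\<lambda>x y. \<mu> x (\<alpha> y) - \<alpha> (\<mu> x y) + \<mu> (\<alpha> x) y)"

definition hoch_b2_wrt :: "('a::real_normed_vector) cochain2 \<Rightarrow> 'a cochain2 \<Rightarrow> 'a cochain3" where
  "hoch_b2_wrt \<mu> \<beta> = blinfun_of_trilinear (\<lambda>x y z. \<mu> x (\<beta> y z) - \<beta> (\<mu> x y) z + \<beta> x (\<mu> y z) - \<mu> (\<beta> x y) z)"

lemma hoch_b1_pointwise_bound:
  fixes \<mu> :: "('a::real_normed_vector) cochain2" and \<alpha> :: "'a cochain1"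
  shows "norm (\<mu> x (\<alpha> y) - \<alpha> (\<mu> x y) + \<mu> (\<alpha> x) y) \<le> 3 * norm \<mu> * norm \<alpha> * norm x * norm y"
proof -
  have "norm (\<mu> x (\<alpha> y)) \<le> norm \<mu> * norm x * (norm \<alpha> * norm y)"
    by (rule order_trans[OF norm_blinfun_apply_apply_le]) (simp add: mult_left_mono norm_blinfun)
  moreover have "norm (\<alpha> (\<mu> x y)) \<le> norm \<alpha> * (norm \<mu> * norm x * norm y)"
    by (rule order_trans[OF norm_blinfun]) (simp add: mult_left_mono norm_blinfun_apply_apply_le)
  moreover have "norm (\<mu> (\<alpha> x) y) \<le> norm \<mu> * (norm \<alpha> * norm x) * norm y"
    by (rule order_trans[OF norm_blinfun_apply_apply_le])
      (simp add: mult_left_mono mult_right_mono norm_blinfun)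
  ultimately show ?thesis
    using norm_triangle_ineq[of "\<mu> x (\<alpha> y) - \<alpha> (\<mu> x y)" "\<mu> (\<alpha> x) y"]
      norm_triangle_ineq4[of "\<mu> x (\<alpha> y)" "\<alpha> (\<mu> x y)"]
    by (simp add: algebra_simps)
qed

lemma hoch_b2_pointwise_bound:
  fixes \<mu> \<beta> :: "('a::real_normed_vector) cochain2"
  shows "norm (\<mu> x (\<beta> y z) - \<beta> (\<mu> x y) z + \<beta> x (\<mu> y z) - \<mu> (\<beta> x y) z)
    \<le> 4 * norm \<mu> * norm \<beta> * norm x * norm y * norm z"
proof -
  have "norm (\<mu> x (\<beta> y z)) \<le> norm \<mu> * norm x * (norm \<beta> * norm y * norm z)"
    by (rule order_trans[OF norm_blinfun_apply_apply_le]) (simp add: mult_left_mono norm_blinfun_apply_apply_le)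
  moreover have "norm (\<beta> (\<mu> x y) z) \<le> norm \<beta> * (norm \<mu> * norm x * norm y) * norm z"
    by (rule order_trans[OF norm_blinfun_apply_apply_le])
      (simp add: mult_left_mono mult_right_mono norm_blinfun_apply_apply_le)
  moreover have "norm (\<beta> x (\<mu> y z)) \<le> norm \<beta> * norm x * (norm \<mu> * norm y * norm z)"
    by (rule order_trans[OF norm_blinfun_apply_apply_le]) (simp add: mult_left_mono norm_blinfun_apply_apply_le)
  moreover have "norm (\<mu> (\<beta> x y) z) \<le> norm \<mu> * (norm \<beta> * norm x * norm y) * norm z"
    by (rule order_trans[OF norm_blinfun_apply_apply_le])
      (simp add: mult_left_mono mult_right_mono norm_blinfun_apply_apply_le)
  ultimately show ?thesis
    using norm_triangle_ineq[of "\<mu> x (\<beta> y z) - \<beta> (\<mu> x y) z + \<beta> x (\<mu> y z)" "- \<mu> (\<beta> x y) z"]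
      norm_triangle_ineq[of "\<mu> x (\<beta> y z) - \<beta> (\<mu> x y) z" "\<beta> x (\<mu> y z)"]
      norm_triangle_ineq4[of "\<mu> x (\<beta> y z)" "\<beta> (\<mu> x y) z"]
    by (simp add: algebra_simps)
qed

lemma hoch_b1_wrt_apply [simp]:
  "hoch_b1_wrt \<mu> \<alpha> x y = \<mu> x (\<alpha> y) - \<alpha> (\<mu> x y) + \<mu> (\<alpha> x) y"
  unfolding hoch_b1_wrt_def
  by (rule blinfun_of_bilinear_apply, rule bounded_bilinearI[OF _ _ _ _ hoch_b1_pointwise_bound])
    (simp_all add: blinfun.bilinear_simps algebra_simps)

lemma hoch_b2_wrt_apply [simp]:
  "hoch_b2_wrt \<mu> \<beta> x y z = \<mu> x (\<beta> y z) - \<beta> (\<mu> x y) z + \<beta> x (\<mu> y z) - \<mu> (\<beta> x y) z"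
  unfolding hoch_b2_wrt_def
proof (rule blinfun_of_trilinear_apply[OF _ _ _ hoch_b2_pointwise_bound])
  show "bounded_bilinear (\<lambda>y z. \<mu> x (\<beta> y z) - \<beta> (\<mu> x y) z + \<beta> x (\<mu> y z) - \<mu> (\<beta> x y) z)" for x
    by (rule bounded_bilinearI[where K="4 * norm \<mu> * norm \<beta> * norm x"])
      (use hoch_b2_pointwise_bound[where x=x] in \<open>simp_all add: blinfun.bilinear_simps algebra_simps\<close>)
qed (simp_all add: blinfun.bilinear_simps algebra_simps)

lemma norm_hoch_b1_wrt_le: "norm (hoch_b1_wrt \<mu> \<alpha>) \<le> 3 * norm \<mu> * norm \<alpha>"
  by (intro norm_blinfun_bound) (auto simp: hoch_b1_pointwise_bound)

lemma norm_hoch_b2_wrt_le: "norm (hoch_b2_wrt \<mu> \<beta>) \<le> 4 * norm \<mu> * norm \<beta>"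
  by (intro norm_blinfun_bound) (auto simp: hoch_b2_pointwise_bound)

interpretation hoch_b1_wrt: bounded_bilinear hoch_b1_wrt
  by (rule bounded_bilinearI[where K=3, OF _ _ _ _ norm_hoch_b1_wrt_le])
    (auto intro!: blinfun_eqI simp: blinfun.bilinear_simps algebra_simps)

interpretation hoch_b2_wrt: bounded_bilinear hoch_b2_wrt
  by (rule bounded_bilinearI[where K=4, OF _ _ _ _ norm_hoch_b2_wrt_le])
    (auto intro!: blinfun_eqI simp: blinfun.bilinear_simps algebra_simps)

lemma hoch_b1_wrt_mult:
  fixes \<mu> :: "('a::{real_normed_algebra,banach}) cochain2"
  assumes "\<And>x y. \<mu> x y = x * y"
  shows "hoch_b1_wrt \<mu> = hoch_b1"
  by (intro ext) (simp add: hoch_b1_wrt_def hoch_b1_def blinfun_of_bilinear_def assms)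

lemma hoch_b2_wrt_mult:
  fixes \<mu> :: "('a::{real_normed_algebra,banach}) cochain2"
  assumes "\<And>x y. \<mu> x y = x * y"
  shows "hoch_b2_wrt \<mu> = hoch_b2"
  by (intro ext)
    (simp add: hoch_b2_wrt_def hoch_b2_def blinfun_of_trilinear_def blinfun_of_bilinear_def assms)

lemma hoch_b2_b1_wrt_eq_0:
  fixes \<mu> :: "('a::real_normed_vector) cochain2"
  assumes "\<And>x y z. \<mu> (\<mu> x y) z = \<mu> x (\<mu> y z)"
  shows "hoch_b2_wrt \<mu> (hoch_b1_wrt \<mu> \<alpha>) = 0"
  by (auto intro!: blinfun_eqI simp: blinfun.bilinear_simps assms algebra_simps)

lemma hoch_b2_wrt_velocity_eq_0:
  fixes m :: "real \<Rightarrow> ('a::real_normed_vector) cochain2"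
  assumes "open I" "t \<in> I"
    and assoc: "\<forall>s\<in>I. \<forall>x y z. m s (m s x y) z = m s x (m s y z)"
    and m': "(m has_vector_derivative D) (at t)"
  shows "hoch_b2_wrt (m t) D = 0"
proof (rule blinfun_eqI)+
  fix x y z
  have m'_at: "((\<lambda>s. m s u v) has_vector_derivative D u v) (at t)" for u v
    by (intro has_vector_derivative_blinfun_apply m')
  have "((\<lambda>s. m s (m s x y) z) has_vector_derivative (m t (D x y) + D (m t x y)) z) (at t)"
    by (intro has_vector_derivative_blinfun_apply blinfun.has_vector_derivative m' m'_at)
  then have left: "((\<lambda>s. m s (m s x y) z) has_vector_derivative m t (D x y) z + D (m t x y) z) (at t)"
    by (simp add: blinfun.add_left)
  have "((\<lambda>s. m s x (m s y z)) has_vector_derivative m t x (D y z) + D x (m t y z)) (at t)"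
    by (intro blinfun.has_vector_derivative m'_at has_vector_derivative_blinfun_apply m')
  then have right: "((\<lambda>s. m s (m s x y) z) has_vector_derivative m t x (D y z) + D x (m t y z)) (at t)"
    by (rule has_vector_derivative_transform_within_open[OF _ assms(1,2)]) (use assoc in auto)
  show "hoch_b2_wrt (m t) D x y z = blinfun_apply (blinfun_apply (blinfun_apply 0 x) y) z"
    using vector_derivative_unique_at[OF left right] by (simp add: algebra_simps)
qed

lemma neumann_series:
  fixes T :: "'v::banach \<Rightarrow> 'v"
  assumes "bounded_linear T" and contr: "\<And>x. norm (T x) \<le> q * norm x" and "0 \<le> q" "q < 1"
  shows summable_neumann_series: "summable (\<lambda>n. (T ^^ n) z)"
    and neumann_series_eq: "(\<Sum>n. (T ^^ n) z) - T (\<Sum>n. (T ^^ n) z) = z"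
proof -
  interpret bounded_linear T by fact
  have bound: "norm ((T ^^ n) z) \<le> q ^ n * norm z" for n
  proof (induction n)
    case (Suc n)
    have "norm ((T ^^ Suc n) z) \<le> q * norm ((T ^^ n) z)" using contr by simp
    also have "\<dots> \<le> q * (q ^ n * norm z)" using Suc \<open>0 \<le> q\<close> by (intro mult_left_mono)
    finally show ?case by simp
  qed simp
  show sums: "summable (\<lambda>n. (T ^^ n) z)"
    by (rule summable_comparison_test'[where N=0, OF summable_mult2[OF summable_geometric]])
      (use bound \<open>0 \<le> q\<close> \<open>q < 1\<close> in auto)
  have "T (\<Sum>n. (T ^^ n) z) = (\<Sum>n. (T ^^ Suc n) z)"
    by (simp add: suminf[OF sums])
  also have "\<dots> = (\<Sum>n. (T ^^ n) z) - z"
    using suminf_split_head[OF sums] by simp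
  finally show "(\<Sum>n. (T ^^ n) z) - T (\<Sum>n. (T ^^ n) z) = z" by simp
qed

lemma bij_blinfun_near_id:
  fixes F :: "'v::banach \<Rightarrow>\<^sub>L 'v"
  assumes "norm (F - id_blinfun) < 1"
  shows "bij (blinfun_apply F)"
proof (rule bijI)
  define q where "q = norm (F - id_blinfun)"
  have near: "norm (F x - x) \<le> q * norm x" for x
    using norm_blinfun[of "F - id_blinfun" x] by (simp add: q_def blinfun.diff_left)
  show "inj F"
  proof (rule injI)
    fix x y assume "F x = F y"
    then have "norm (x - y) \<le> q * norm (x - y)"
      using near[of "x - y"] by (simp add: blinfun.diff_right norm_minus_commute)
    then have "(1 - q) * norm (x - y) \<le> 0"
      by (simp add: algebra_simps)
    then show "x = y"
      using assms by (simp add: q_def mult_le_0_iff)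
  qed
  define T where "T x = x - F x" for x
  have "bounded_linear T"
    unfolding T_def by (intro bounded_linear_sub bounded_linear_ident blinfun.bounded_linear_right)
  moreover have "norm (T x) \<le> q * norm x" for x
    using near[of x] by (simp add: T_def norm_minus_commute)
  ultimately have "F (\<Sum>n. (T ^^ n) z) = z" for z
    using neumann_series_eq[of T q z] assms by (simp add: T_def q_def)
  then show "surj F" by (rule surjI)
qed

lemma vector_differentiable_bound:
  fixes f :: "real \<Rightarrow> 'b::real_normed_vector"
  assumes "convex S"
    and f': "\<And>t. t \<in> S \<Longrightarrow> (f has_vector_derivative f' t) (at t within S)"
    and bound: "\<And>t. t \<in> S \<Longrightarrow> norm (f' t) \<le> B"
    and "x \<in> S" "y \<in> S"
  shows "norm (f x - f y) \<le> B * \<bar>x - y\<bar>"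
proof -
  have "norm (f x - f y) \<le> B * norm (x - y)"
  proof (rule differentiable_bound[OF \<open>convex S\<close> _ _ \<open>x \<in> S\<close> \<open>y \<in> S\<close>])
    show "(f has_derivative (\<lambda>h. h *\<^sub>R f' t)) (at t within S)" if "t \<in> S" for t
      using f'[OF that] by (simp add: has_vector_derivative_def)
    show "onorm (\<lambda>h. h *\<^sub>R f' t) \<le> B" if "t \<in> S" for t
    proof (rule onorm_le)
      fix h :: real
      have "\<bar>h\<bar> * norm (f' t) \<le> \<bar>h\<bar> * B"
        using bound[OF that] by (rule mult_left_mono) simp
      then show "norm (h *\<^sub>R f' t) \<le> B * norm h"
        by (simp add: mult.commute)
    qed
  qed
  then show ?thesis by simp
qed

lemma interval_around_0_close:
  fixes m :: "real \<Rightarrow> 'b::metric_space"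
  assumes "open I" "0 \<in> I" "isCont m 0" "0 < r"
  obtains \<delta> where "0 < \<delta>" "{-\<delta>..\<delta>} \<subseteq> I" "\<And>t. t \<in> {-\<delta>..\<delta>} \<Longrightarrow> dist (m t) (m 0) < r"
proof -
  obtain e where "0 < e" and e: "\<And>t. dist t 0 < e \<Longrightarrow> dist (m t) (m 0) < r"
    using \<open>isCont m 0\<close> \<open>0 < r\<close> unfolding continuous_at_eps_delta by blast
  obtain e' where "0 < e'" "ball 0 e' \<subseteq> I"
    using \<open>open I\<close> \<open>0 \<in> I\<close> openE by blast
  have "{-min e e' / 2..min e e' / 2} \<subseteq> ball 0 e \<inter> ball 0 e'"
    using \<open>0 < e\<close> \<open>0 < e'\<close> by (auto simp: dist_real_def)
  then show ?thesis
    using \<open>0 < e\<close> \<open>0 < e'\<close> \<open>ball 0 e' \<subseteq> I\<close> e by (intro that[of "min e e' / 2"]) auto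
qed

text \<open>Each application of the mean value inequality on \<open>[-\<epsilon>, \<epsilon>]\<close> improves a bound
  \<open>norm (E s p) \<le> c * w p\<close> by the factor \<open>L * \<epsilon>\<close>.\<close>

lemma eq_0_if_linear_growth:
  fixes E E' :: "real \<Rightarrow> 'p \<Rightarrow> 'v::real_normed_vector" and w :: "'p \<Rightarrow> real"
  assumes "0 \<le> L" "L * \<epsilon> < 1"
    and E0: "\<And>p. E 0 p = 0"
    and E': "\<And>s p. s \<in> {-\<epsilon>..\<epsilon>} \<Longrightarrow> ((\<lambda>s. E s p) has_vector_derivative E' s p) (at s within {-\<epsilon>..\<epsilon>})"
    and growth: "\<And>c s p. 0 \<le> c \<Longrightarrow> (\<And>r q. r \<in> {-\<epsilon>..\<epsilon>} \<Longrightarrow> norm (E r q) \<le> c * w q) \<Longrightarrow>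
      s \<in> {-\<epsilon>..\<epsilon>} \<Longrightarrow> norm (E' s p) \<le> L * c * w p"
    and bound: "\<And>s p. s \<in> {-\<epsilon>..\<epsilon>} \<Longrightarrow> norm (E s p) \<le> B * w p" and "0 \<le> B"
    and w: "\<And>p. 0 \<le> w p"
    and s: "s \<in> {-\<epsilon>..\<epsilon>}"
  shows "E s p = 0"
proof -
  have "0 \<le> \<epsilon>" using s by simp
  have iterate: "norm (E s p) \<le> B * (L * \<epsilon>) ^ n * w p" if "s \<in> {-\<epsilon>..\<epsilon>}" for n s p
    using that
  proof (induction n arbitrary: s p)
    case 0
    then show ?case using bound by simp
  next
    case (Suc n)
    define c where "c = B * (L * \<epsilon>) ^ n"
    have "0 \<le> c" using \<open>0 \<le> B\<close> \<open>0 \<le> L\<close> \<open>0 \<le> \<epsilon>\<close> by (simp add: c_def)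
    have "norm (E s p - E 0 p) \<le> L * c * w p * \<bar>s - 0\<bar>"
      by (rule vector_differentiable_bound[OF _ E' growth[OF \<open>0 \<le> c\<close>]])
        (use Suc \<open>0 \<le> \<epsilon>\<close> in \<open>auto simp: c_def\<close>)
    also have "\<dots> \<le> L * c * w p * \<epsilon>"
      using Suc.prems \<open>0 \<le> L\<close> \<open>0 \<le> c\<close> w by (intro mult_left_mono) auto
    finally show ?case by (simp add: E0 c_def ac_simps)
  qed
  have "(\<lambda>n. B * (L * \<epsilon>) ^ n * w p) \<longlonglongrightarrow> B * 0 * w p"
    using \<open>0 \<le> L\<close> \<open>0 \<le> \<epsilon>\<close> \<open>L * \<epsilon> < 1\<close> by (intro tendsto_intros LIMSEQ_power_zero) auto
  then have "norm (E s p) \<le> B * 0 * w p"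
    by (rule LIMSEQ_le_const) (use iterate s in blast)
  then show ?thesis by simp
qed

section \<open>Linear differential equations for operators\<close>

locale linear_ode =
  fixes d K :: real and Y :: "real \<Rightarrow> ('v::banach \<Rightarrow>\<^sub>L 'v)"
  assumes d_pos: "0 < d"
    and Y_cont: "continuous_on {-d..d} Y"
    and Y_bound: "\<And>t. t \<in> {-d..d} \<Longrightarrow> norm (Y t) \<le> K"
    and contraction: "d * K < 1"
begin

definition volterra :: "(real \<Rightarrow> 'v \<Rightarrow>\<^sub>L 'v) \<Rightarrow> real \<Rightarrow> 'v \<Rightarrow>\<^sub>L 'v" where
  "volterra u t = integral {-d..t} (\<lambda>s. u s o\<^sub>L Y s)"

lemma volterra_has_vector_derivative:
  assumes "continuous_on {-d..d} u" "t \<in> {-d..d}"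
  shows "(volterra u has_vector_derivative u t o\<^sub>L Y t) (at t within {-d..d})"
  unfolding volterra_def
  by (rule integral_has_vector_derivative) (use assms Y_cont in \<open>auto intro!: continuous_intros\<close>)

lemma continuous_on_volterra: "continuous_on {-d..d} u \<Longrightarrow> continuous_on {-d..d} (volterra u)"
  using volterra_has_vector_derivative has_vector_derivative_continuous
  by (meson continuous_on_eq_continuous_within)

text \<open>\<open>ext_cont\<close> extends functions on \<open>[-d, d]\<close> constantly, so that the Picard map acts on the
  complete space of bounded continuous functions.\<close>

definition picard :: "(real \<Rightarrow>\<^sub>C ('v \<Rightarrow>\<^sub>L 'v)) \<Rightarrow> real \<Rightarrow>\<^sub>C ('v \<Rightarrow>\<^sub>L 'v)" where
  "picard u = Bcontfun (ext_cont (\<lambda>t. id_blinfun + volterra u t - volterra u 0) (-d) d)"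

lemma picard_apply: "picard u t = id_blinfun + volterra u (clamp (-d) d t) - volterra u 0"
proof -
  have "continuous_on (cbox (-d) d) (\<lambda>t. id_blinfun + volterra u t - volterra u 0)"
    by (auto intro!: continuous_intros continuous_on_volterra)
  then obtain g :: "real \<Rightarrow>\<^sub>C ('v \<Rightarrow>\<^sub>L 'v)"
    where g: "\<And>t. g t = id_blinfun + volterra u (clamp (-d) d t) - volterra u 0"
    by (rule continuous_on_cbox_bcontfunE) blast
  then have "ext_cont (\<lambda>t. id_blinfun + volterra u t - volterra u 0) (-d) d = apply_bcontfun g"
    by (auto simp: ext_cont_def)
  then have "picard u = g"
    unfolding picard_def by (simp add: apply_bcontfun_inverse)
  then show ?thesis
    using g by simp
qed

lemma K_nonneg: "0 \<le> K"
  using Y_bound[of 0] d_pos by (auto intro: order_trans[OF norm_ge_zero])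

lemma clamp_mem_interval: "clamp (-d) d t \<in> {-d..d}"
  using clamp_in_interval[of "-d" d t] d_pos by simp

lemma dist_picard_le: "dist (picard u) (picard v) \<le> d * K * dist u v"
proof (rule dist_bound)
  fix t
  define c where "c = clamp (-d) d t"
  have "c \<in> {-d..d}" using clamp_mem_interval by (simp add: c_def)
  define G where "G s = volterra u s - volterra v s" for s
  have "(G has_vector_derivative (u s o\<^sub>L Y s) - (v s o\<^sub>L Y s)) (at s within {-d..d})"
    if "s \<in> {-d..d}" for s
    unfolding G_def by (intro has_vector_derivative_diff volterra_has_vector_derivative that) simp_all
  moreover have "norm ((u s o\<^sub>L Y s) - (v s o\<^sub>L Y s)) \<le> dist u v * K" if "s \<in> {-d..d}" for s
  proof -
    have "norm ((u s o\<^sub>L Y s) - (v s o\<^sub>L Y s)) \<le> norm (u s - v s) * norm (Y s)"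
      using norm_blinfun_compose[of "u s - v s" "Y s"]
      by (simp add: bounded_bilinear.diff_left[OF bounded_bilinear_blinfun_compose])
    also have "\<dots> \<le> dist u v * K"
      using dist_bounded[of u s v] Y_bound[OF that] by (intro mult_mono) (auto simp: dist_norm)
    finally show ?thesis .
  qed
  ultimately have "norm (G c - G 0) \<le> dist u v * K * \<bar>c - 0\<bar>"
    by (intro vector_differentiable_bound[of "{-d..d}"]) (use \<open>c \<in> {-d..d}\<close> d_pos in auto)
  also have "\<dots> \<le> dist u v * K * d"
    using \<open>c \<in> {-d..d}\<close> K_nonneg by (intro mult_left_mono) auto
  finally show "dist (picard u t) (picard v t) \<le> d * K * dist u v"
    by (simp add: picard_apply G_def c_def[symmetric] dist_norm algebra_simps)
qed

lemma solution_exists: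
  obtains H where "H 0 = id_blinfun"
    and "\<And>t. t \<in> {-d<..<d} \<Longrightarrow> (H has_vector_derivative H t o\<^sub>L Y t) (at t)"
proof -
  obtain u where u: "picard u = u"
    using banach_fix_type[of "d * K" picard] dist_picard_le d_pos K_nonneg contraction by auto
  define H where "H = apply_bcontfun u"
  have H_eq: "H t = id_blinfun + volterra H t - volterra H 0" if "t \<in> {-d..d}" for t
    using picard_apply[of u t] u that by (simp add: H_def)
  show ?thesis
  proof
    show "H 0 = id_blinfun" using H_eq[of 0] d_pos by simp
    fix t assume t: "t \<in> {-d<..<d}"
    have "((\<lambda>s. id_blinfun + volterra H s - volterra H 0) has_vector_derivative H t o\<^sub>L Y t)
        (at t within {-d<..<d})"
      using volterra_has_vector_derivative[of H t] t
      by (auto intro!: derivative_eq_intros intro: has_vector_derivative_within_subset simp: H_def)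
    then have "((\<lambda>s. id_blinfun + volterra H s - volterra H 0) has_vector_derivative H t o\<^sub>L Y t) (at t)"
      by (rule has_vector_derivative_within_open[OF t open_greaterThanLessThan, THEN iffD1])
    then show "(H has_vector_derivative H t o\<^sub>L Y t) (at t)"
      by (rule has_vector_derivative_transform_within_open[OF _ open_greaterThanLessThan t])
        (simp add: H_eq)
  qed
qed

end

section \<open>Perturbing a contracting homotopy\<close>

locale hochschild_homotopy =
  fixes h :: "('a::banach) cochain2 \<Rightarrow> 'a cochain1" and g :: "'a cochain3 \<Rightarrow> 'a cochain2"
    and \<mu>\<^sub>0 :: "'a cochain2"
  assumes h: "bounded_linear h" and g: "bounded_linear g"
    and homotopy: "\<And>X. hoch_b1_wrt \<mu>\<^sub>0 (h X) + g (hoch_b2_wrt \<mu>\<^sub>0 X) = X"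
begin

interpretation h: bounded_linear h by (rule h)
interpretation g: bounded_linear g by (rule g)

definition homotopy_op :: "'a cochain2 \<Rightarrow> 'a cochain2 \<Rightarrow> 'a cochain2" where
  "homotopy_op \<mu> X = hoch_b1_wrt \<mu> (h X) + g (hoch_b2_wrt \<mu> X)"

lemma bounded_bilinear_homotopy_op: "bounded_bilinear homotopy_op"
proof -
  obtain Kh where "0 \<le> Kh" and Kh: "\<And>X. norm (h X) \<le> norm X * Kh"
    using h.nonneg_bounded by blast
  obtain Kg where "0 \<le> Kg" and Kg: "\<And>Z. norm (g Z) \<le> norm Z * Kg"
    using g.nonneg_bounded by blast
  have "norm (hoch_b1_wrt \<mu> (h X)) \<le> 3 * norm \<mu> * (norm X * Kh)" for \<mu> X
    by (rule order_trans[OF norm_hoch_b1_wrt_le]) (simp add: Kh mult_left_mono)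
  moreover have "norm (g (hoch_b2_wrt \<mu> X)) \<le> (4 * norm \<mu> * norm X) * Kg" for \<mu> X
    by (rule order_trans[OF Kg]) (simp add: \<open>0 \<le> Kg\<close> norm_hoch_b2_wrt_le mult_right_mono)
  ultimately have bound:
    "norm (homotopy_op \<mu> X) \<le> 3 * norm \<mu> * (norm X * Kh) + (4 * norm \<mu> * norm X) * Kg" for \<mu> X
    unfolding homotopy_op_def by (intro order_trans[OF norm_triangle_ineq add_mono])
  have "norm (homotopy_op \<mu> X) \<le> (3 * Kh + 4 * Kg) * norm \<mu> * norm X" for \<mu> X
    using bound[of \<mu> X] by (simp add: algebra_simps)
  then show ?thesis
    by (intro bounded_bilinearI)
      (simp_all add: homotopy_op_def hoch_b1_wrt.bilinear_simps hoch_b2_wrt.bilinear_simps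
        h.add h.scaleR g.add g.scaleR scaleR_add_right)
qed

interpretation homotopy_op: bounded_bilinear homotopy_op
  by (rule bounded_bilinear_homotopy_op)

definition homotopy_error :: "'a cochain2 \<Rightarrow> 'a cochain2 \<Rightarrow> 'a cochain2" where
  "homotopy_error \<mu> X = X - homotopy_op \<mu> X"

lemma homotopy_error_eq: "homotopy_error \<mu> X = homotopy_op (\<mu>\<^sub>0 - \<mu>) X"
proof -
  have "homotopy_op \<mu>\<^sub>0 X = X"
    using homotopy by (simp add: homotopy_op_def)
  then show ?thesis
    by (simp add: homotopy_error_def homotopy_op.diff_left)
qed

lemma bounded_linear_homotopy_error: "bounded_linear (homotopy_error \<mu>)"
  unfolding homotopy_error_eq[abs_def] by (rule homotopy_op.bounded_linear_right)

lemma homotopy_error_small: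
  obtains r where "0 < r" and "\<And>\<mu> X. norm (\<mu> - \<mu>\<^sub>0) \<le> r \<Longrightarrow> norm (homotopy_error \<mu> X) \<le> 1/2 * norm X"
proof -
  obtain C where "0 < C" and C: "\<And>\<nu> X. norm (homotopy_op \<nu> X) \<le> norm \<nu> * norm X * C"
    using homotopy_op.pos_bounded by blast
  show ?thesis
  proof
    show "0 < 1 / (2 * C)" using \<open>0 < C\<close> by simp
    fix \<mu> X :: "'a cochain2"
    assume "norm (\<mu> - \<mu>\<^sub>0) \<le> 1 / (2 * C)"
    then have "norm (\<mu>\<^sub>0 - \<mu>) * norm X * C \<le> 1 / (2 * C) * norm X * C"
      using \<open>0 < C\<close> by (intro mult_right_mono) (simp_all add: norm_minus_commute)
    then show "norm (homotopy_error \<mu> X) \<le> 1/2 * norm X"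
      using C[of "\<mu>\<^sub>0 - \<mu>" X] \<open>0 < C\<close> by (simp add: homotopy_error_eq)
  qed
qed

definition homotopy_inv :: "'a cochain2 \<Rightarrow> 'a cochain2 \<Rightarrow> 'a cochain2" where
  "homotopy_inv \<mu> D = (\<Sum>n. (homotopy_error \<mu> ^^ n) D)"

lemma homotopy_op_homotopy_inv:
  assumes "\<And>X. norm (homotopy_error \<mu> X) \<le> 1/2 * norm X"
  shows "homotopy_op \<mu> (homotopy_inv \<mu> D) = D"
proof -
  have "homotopy_op \<mu> X = X - homotopy_error \<mu> X" for X
    by (simp add: homotopy_error_def)
  then show ?thesis
    using neumann_series_eq[OF bounded_linear_homotopy_error assms, of D]
    by (simp add: homotopy_inv_def)
qed

lemma hoch_b2_wrt_homotopy_inv: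
  fixes \<mu> :: "'a cochain2"
  assumes assoc: "\<And>x y z. \<mu> (\<mu> x y) z = \<mu> x (\<mu> y z)"
    and small: "\<And>X. norm (homotopy_error \<mu> X) \<le> 1/2 * norm X"
    and cocycle: "hoch_b2_wrt \<mu> D = 0"
  shows "hoch_b2_wrt \<mu> (homotopy_inv \<mu> D) = 0"
proof -
  have "hoch_b2_wrt \<mu> (homotopy_error \<mu> X) = 0" if "hoch_b2_wrt \<mu> X = 0" for X
    using that hoch_b2_b1_wrt_eq_0[OF assoc]
    by (simp add: homotopy_error_def homotopy_op_def hoch_b2_wrt.diff_right hoch_b2_wrt.add_right)
  then have "hoch_b2_wrt \<mu> ((homotopy_error \<mu> ^^ n) D) = 0" for n
    by (induction n) (simp_all add: cocycle)
  then show ?thesis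
    using hoch_b2_wrt.bounded_linear_right[THEN bounded_linear.suminf,
        OF summable_neumann_series[OF bounded_linear_homotopy_error small]]
    by (simp add: homotopy_inv_def)
qed

lemma hoch_b1_wrt_homotopy_inv:
  fixes \<mu> :: "'a cochain2"
  assumes "\<And>x y z. \<mu> (\<mu> x y) z = \<mu> x (\<mu> y z)"
    and "\<And>X. norm (homotopy_error \<mu> X) \<le> 1/2 * norm X"
    and "hoch_b2_wrt \<mu> D = 0"
  shows "hoch_b1_wrt \<mu> (h (homotopy_inv \<mu> D)) = D"
  using homotopy_op_homotopy_inv[OF assms(2), of D] hoch_b2_wrt_homotopy_inv[OF assms]
  by (simp add: homotopy_op_def)

lemma continuous_on_homotopy_inv:
  assumes m: "continuous_on S m" and D: "continuous_on S D"
    and small: "\<And>t X. t \<in> S \<Longrightarrow> norm (homotopy_error (m t) X) \<le> 1/2 * norm X"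
  shows "continuous_on S (\<lambda>t. homotopy_inv (m t) (D t))"
proof -
  define E where "E t = homotopy_inv (m t) (D t)" for t
  obtain C where C: "\<And>\<nu> X. norm (homotopy_op \<nu> X) \<le> norm \<nu> * norm X * C"
    using homotopy_op.pos_bounded by blast
  have op_E: "homotopy_op (m t) (E t) = D t" if "t \<in> S" for t
    using homotopy_op_homotopy_inv[OF small[OF that]] by (simp add: E_def)
  have E_diff: "norm (E t - E s) \<le> 2 * (norm (D t - D s) + norm (m s - m t) * norm (E s) * C)"
    if "t \<in> S" "s \<in> S" for t s
  proof -
    have "homotopy_error (m t) (E t - E s) = (E t - E s) - (D t - homotopy_op (m t) (E s))"
      by (simp add: homotopy_error_def homotopy_op.diff_right op_E[OF that(1)])
    moreover have "homotopy_op (m s - m t) (E s) = D s - homotopy_op (m t) (E s)"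
      by (simp add: homotopy_op.diff_left op_E[OF that(2)])
    ultimately have E_diff_eq:
      "E t - E s = (D t - D s) + homotopy_error (m t) (E t - E s) + homotopy_op (m s - m t) (E s)"
      by simp
    have "norm (E t - E s) \<le> norm (D t - D s) + norm (homotopy_error (m t) (E t - E s))
        + norm (homotopy_op (m s - m t) (E s))"
      by (subst E_diff_eq) (intro norm_triangle_le add_right_mono norm_triangle_ineq)
    then show ?thesis
      using small[OF that(1), of "E t - E s"] C[of "m s - m t" "E s"] unfolding distrib_left by linarith
  qed
  show ?thesis
    unfolding continuous_on_def E_def[symmetric]
  proof
    fix s assume "s \<in> S"
    define bound where "bound t = 2 * (norm (D t - D s) + norm (m s - m t) * norm (E s) * C)" for t
    have "(D \<longlongrightarrow> D s) (at s within S)" "(m \<longlongrightarrow> m s) (at s within S)"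
      using D m \<open>s \<in> S\<close> by (auto simp: continuous_on_def)
    then have "(bound \<longlongrightarrow> 2 * (norm (D s - D s) + norm (m s - m s) * norm (E s) * C)) (at s within S)"
      unfolding bound_def by (intro tendsto_intros)
    then have "(bound \<longlongrightarrow> 0) (at s within S)"
      by simp
    moreover have "\<forall>\<^sub>F t in at s within S. norm (E t - E s) \<le> bound t"
      using E_diff \<open>s \<in> S\<close> by (auto simp: eventually_at_filter bound_def)
    ultimately have "((\<lambda>t. E t - E s) \<longlongrightarrow> 0) (at s within S)"
      by (rule Lim_null_comparison[rotated])
    then show "(E \<longlongrightarrow> E s) (at s within S)"
      by (rule LIM_zero_cancel)
  qed
qed

lemma velocity_is_coboundary:
  fixes m :: "real \<Rightarrow> 'a cochain2"
  assumes "open I" "0 \<in> I"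
    and assoc: "\<forall>t\<in>I. \<forall>x y z. m t (m t x y) z = m t x (m t y z)"
    and "m C1_differentiable_on I" and "m 0 = \<mu>\<^sub>0"
  obtains \<delta> Y where "0 < \<delta>" "{-\<delta>..\<delta>} \<subseteq> I" "continuous_on {-\<delta>..\<delta>} Y"
    "\<And>t. t \<in> {-\<delta>..\<delta>} \<Longrightarrow> (m has_vector_derivative hoch_b1_wrt (m t) (Y t)) (at t)"
proof -
  obtain D where m': "\<And>t. t \<in> I \<Longrightarrow> (m has_vector_derivative D t) (at t)"
    and "continuous_on I D"
    using \<open>m C1_differentiable_on I\<close> by (auto simp: C1_differentiable_on_def)
  have "continuous_on I m"
    using m' by (intro continuous_at_imp_continuous_on ballI has_vector_derivative_continuous)
  then have "isCont m 0"
    using continuous_on_eq_continuous_at[OF \<open>open I\<close>] \<open>0 \<in> I\<close> by blast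
  obtain r where "0 < r"
    and small: "\<And>\<mu> X. norm (\<mu> - \<mu>\<^sub>0) \<le> r \<Longrightarrow> norm (homotopy_error \<mu> X) \<le> 1/2 * norm X"
    by (rule homotopy_error_small) blast
  obtain \<delta> where "0 < \<delta>" and sub: "{-\<delta>..\<delta>} \<subseteq> I"
    and close: "\<And>t. t \<in> {-\<delta>..\<delta>} \<Longrightarrow> dist (m t) (m 0) < r"
    by (rule interval_around_0_close[OF \<open>open I\<close> \<open>0 \<in> I\<close> \<open>isCont m 0\<close> \<open>0 < r\<close>]) blast+
  have small_t: "norm (homotopy_error (m t) X) \<le> 1/2 * norm X" if "t \<in> {-\<delta>..\<delta>}" for t X
    using close[OF that] \<open>m 0 = \<mu>\<^sub>0\<close> by (intro small) (auto simp: dist_norm)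
  define Y where "Y t = h (homotopy_inv (m t) (D t))" for t
  have "continuous_on {-\<delta>..\<delta>} Y"
    unfolding Y_def
    by (intro h.continuous_on continuous_on_homotopy_inv small_t)
      (use \<open>continuous_on I m\<close> \<open>continuous_on I D\<close> sub in \<open>auto intro: continuous_on_subset\<close>)
  moreover have "(m has_vector_derivative hoch_b1_wrt (m t) (Y t)) (at t)" if t: "t \<in> {-\<delta>..\<delta>}" for t
  proof -
    have "hoch_b2_wrt (m t) (D t) = 0"
      using t sub by (intro hoch_b2_wrt_velocity_eq_0[OF \<open>open I\<close> _ assoc m']) auto
    then have "hoch_b1_wrt (m t) (Y t) = D t"
      unfolding Y_def using assoc t sub by (intro hoch_b1_wrt_homotopy_inv small_t) auto
    then show ?thesis
      using m' t sub by auto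
  qed
  ultimately show ?thesis
    using \<open>0 < \<delta>\<close> sub by (rule_tac that) auto
qed

end

section \<open>Transport along the deformation\<close>

definition hom_defect ::
  "(real \<Rightarrow> ('a::{real_normed_algebra,banach}) cochain1) \<Rightarrow> (real \<Rightarrow> 'a cochain2) \<Rightarrow> real \<Rightarrow> 'a \<times> 'a \<Rightarrow> 'a"
  where "hom_defect H m s = (\<lambda>(x, y). H s (m s x y) - H s x * H s y)"

lemma hom_defect_has_vector_derivative:
  fixes m :: "real \<Rightarrow> ('a::{real_normed_algebra,banach}) cochain2" and H Y :: "real \<Rightarrow> 'a cochain1"
  assumes H': "(H has_vector_derivative H s o\<^sub>L Y s) (at s within S)"
    and m': "(m has_vector_derivative hoch_b1_wrt (m s) (Y s)) (at s within S)"
  shows "((\<lambda>s. hom_defect H m s (x, y)) has_vector_derivative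
      hom_defect H m s (Y s x, y) + hom_defect H m s (x, Y s y)) (at s within S)"
proof -
  have "((\<lambda>s. H s (m s x y)) has_vector_derivative
      H s (hoch_b1_wrt (m s) (Y s) x y) + (H s o\<^sub>L Y s) (m s x y)) (at s within S)"
    by (intro blinfun.has_vector_derivative H' has_vector_derivative_blinfun_apply m')
  moreover have "((\<lambda>s. H s x * H s y) has_vector_derivative
      H s x * (H s o\<^sub>L Y s) y + (H s o\<^sub>L Y s) x * H s y) (at s within S)"
    by (intro has_vector_derivative_mult has_vector_derivative_blinfun_apply H')
  ultimately show ?thesis
    unfolding hom_defect_def
    by (auto elim!: has_vector_derivative_eq_rhs[OF has_vector_derivative_diff]
        simp: blinfun.bilinear_simps algebra_simps)
qed

lemma norm_hom_defect_le:
  "norm (hom_defect H m s (x, y))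
    \<le> (norm (H s) * norm (m s) + norm (H s) * norm (H s)) * (norm x * norm y)"
proof -
  have "norm (H s (m s x y)) \<le> norm (H s) * (norm (m s) * norm x * norm y)"
    by (rule order_trans[OF norm_blinfun]) (simp add: mult_left_mono norm_blinfun_apply_apply_le)
  moreover have "norm (H s x * H s y) \<le> (norm (H s) * norm x) * (norm (H s) * norm y)"
    by (intro order_trans[OF norm_mult_ineq] mult_mono norm_blinfun) simp_all
  ultimately show ?thesis
    using norm_triangle_ineq4[of "H s (m s x y)" "H s x * H s y"]
    by (simp add: hom_defect_def algebra_simps)
qed

lemma transport_is_homomorphism:
  fixes m :: "real \<Rightarrow> ('a::{real_normed_algebra,banach}) cochain2" and H Y :: "real \<Rightarrow> 'a cochain1"
  assumes "2 * K * \<epsilon> < 1"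
    and H': "\<And>t. t \<in> {-\<epsilon>..\<epsilon>} \<Longrightarrow> (H has_vector_derivative H t o\<^sub>L Y t) (at t within {-\<epsilon>..\<epsilon>})"
    and m': "\<And>t. t \<in> {-\<epsilon>..\<epsilon>} \<Longrightarrow> (m has_vector_derivative hoch_b1_wrt (m t) (Y t)) (at t within {-\<epsilon>..\<epsilon>})"
    and Y: "\<And>t. t \<in> {-\<epsilon>..\<epsilon>} \<Longrightarrow> norm (Y t) \<le> K"
    and "H 0 = id_blinfun" and "\<And>x y. m 0 x y = x * y"
    and t: "t \<in> {-\<epsilon>..\<epsilon>}"
  shows "H t (m t x y) = H t x * H t y"
proof -
  define S where "S = {-\<epsilon>..\<epsilon>}"
  have "0 \<le> K" using Y[of 0] t by (auto intro: order_trans[OF norm_ge_zero])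
  have "compact S" by (simp add: S_def)
  have "continuous_on S H"
    unfolding S_def continuous_on_eq_continuous_within
    using H' has_vector_derivative_continuous by blast
  then obtain BH where "0 \<le> BH" and BH: "\<And>s. s \<in> S \<Longrightarrow> norm (H s) \<le> BH"
    using continuous_on_compact_bound[OF \<open>compact S\<close>] by blast
  have "continuous_on S m"
    unfolding S_def continuous_on_eq_continuous_within
    using m' has_vector_derivative_continuous by blast
  then obtain Bm where "0 \<le> Bm" and Bm: "\<And>s. s \<in> S \<Longrightarrow> norm (m s) \<le> Bm"
    using continuous_on_compact_bound[OF \<open>compact S\<close>] by blast
  define w :: "'a \<times> 'a \<Rightarrow> real" where "w = (\<lambda>(x, y). norm x * norm y)"
  define E' where "E' s = (\<lambda>(x, y). hom_defect H m s (Y s x, y) + hom_defect H m s (x, Y s y))" for s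
  have E': "((\<lambda>s. hom_defect H m s p) has_vector_derivative E' s p) (at s within S)" if "s \<in> S" for s p
  proof -
    have "(H has_vector_derivative H s o\<^sub>L Y s) (at s within S)"
      "(m has_vector_derivative hoch_b1_wrt (m s) (Y s)) (at s within S)"
      using H' m' that by (simp_all add: S_def)
    from hom_defect_has_vector_derivative[where H=H and Y=Y and s=s, OF this] show ?thesis
      by (cases p) (simp add: E'_def)
  qed
  have growth: "norm (E' s p) \<le> 2 * K * c * w p"
    if "0 \<le> c" and c: "\<And>r q. r \<in> S \<Longrightarrow> norm (hom_defect H m r q) \<le> c * w q" and "s \<in> S" for c s p
  proof -
    obtain x y where p: "p = (x, y)" by fastforce
    have Y_s: "norm (Y s z) \<le> K * norm z" for z
      using Y \<open>s \<in> S\<close> by (intro order_trans[OF norm_blinfun mult_right_mono]) (auto simp: S_def)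
    have "norm (hom_defect H m s (Y s x, y)) \<le> c * (norm (Y s x) * norm y)"
      using c[OF \<open>s \<in> S\<close>, of "(Y s x, y)"] by (simp add: w_def)
    also have "\<dots> \<le> c * (K * norm x * norm y)"
      by (intro mult_left_mono mult_right_mono Y_s) (simp_all add: \<open>0 \<le> c\<close>)
    finally have "norm (hom_defect H m s (Y s x, y)) \<le> c * (K * norm x * norm y)" .
    moreover have "norm (hom_defect H m s (x, Y s y)) \<le> c * (norm x * norm (Y s y))"
      using c[OF \<open>s \<in> S\<close>, of "(x, Y s y)"] by (simp add: w_def)
    moreover have "\<dots> \<le> c * (norm x * (K * norm y))"
      by (intro mult_left_mono Y_s) (simp_all add: \<open>0 \<le> c\<close>)
    ultimately show ?thesis
      using norm_triangle_ineq[of "hom_defect H m s (Y s x, y)" "hom_defect H m s (x, Y s y)"]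
      by (simp add: p E'_def w_def algebra_simps)
  qed
  have bound: "norm (hom_defect H m s p) \<le> (BH * Bm + BH * BH) * w p" if "s \<in> S" for s p
  proof -
    obtain x y where p: "p = (x, y)" by fastforce
    have "norm (H s) * norm (m s) + norm (H s) * norm (H s) \<le> BH * Bm + BH * BH"
      using BH[OF that] Bm[OF that] \<open>0 \<le> BH\<close> by (intro add_mono mult_mono) simp_all
    then have "(norm (H s) * norm (m s) + norm (H s) * norm (H s)) * (norm x * norm y)
        \<le> (BH * Bm + BH * BH) * (norm x * norm y)"
      by (rule mult_right_mono) simp
    from order_trans[OF norm_hom_defect_le[of H m s x y] this] show ?thesis
      by (simp add: p w_def)
  qed
  have "hom_defect H m t (x, y) = 0"
  proof (rule eq_0_if_linear_growth[where L="2 * K" and E'=E' and w=w and B="BH * Bm + BH * BH"])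
    show "hom_defect H m 0 p = 0" for p
      using \<open>H 0 = id_blinfun\<close> \<open>\<And>x y. m 0 x y = x * y\<close> by (auto simp: hom_defect_def)
  qed (use E' growth bound \<open>0 \<le> K\<close> \<open>0 \<le> BH\<close> \<open>0 \<le> Bm\<close> \<open>2 * K * \<epsilon> < 1\<close> t
      in \<open>simp_all add: S_def w_def split: prod.split\<close>)
  then show ?thesis
    by (simp add: hom_defect_def)
qed

lemma linear_ode_local_solution:
  fixes Y :: "real \<Rightarrow> ('v::banach \<Rightarrow>\<^sub>L 'v)"
  assumes "0 < \<delta>" and Y_cont: "continuous_on {-\<delta>..\<delta>} Y"
    and Y_bound: "\<And>t. t \<in> {-\<delta>..\<delta>} \<Longrightarrow> norm (Y t) \<le> K"
  obtains d H where "0 < d" "d \<le> \<delta>" "d * K < 1" "H 0 = id_blinfun"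
    "\<And>t. t \<in> {-d<..<d} \<Longrightarrow> (H has_vector_derivative H t o\<^sub>L Y t) (at t)"
proof -
  have "0 \<le> K" using Y_bound[of 0] \<open>0 < \<delta>\<close> by (auto intro: order_trans[OF norm_ge_zero])
  define d where "d = min \<delta> (1 / (2 * (K + 1)))"
  have "0 < d" "d \<le> \<delta>" using \<open>0 < \<delta>\<close> \<open>0 \<le> K\<close> by (auto simp: d_def)
  have "d * K \<le> 1 / (2 * (K + 1)) * K"
    using \<open>0 \<le> K\<close> by (intro mult_right_mono) (auto simp: d_def)
  also have "\<dots> < 1" using \<open>0 \<le> K\<close> by (simp add: field_simps)
  finally have "d * K < 1" .
  then have "linear_ode d K Y"
    using \<open>0 < d\<close> \<open>d \<le> \<delta>\<close> Y_bound by unfold_locales (auto intro: continuous_on_subset[OF Y_cont])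
  then obtain H where "H 0 = id_blinfun"
    and "\<And>t. t \<in> {-d<..<d} \<Longrightarrow> (H has_vector_derivative H t o\<^sub>L Y t) (at t)"
    by (rule linear_ode.solution_exists) blast
  with \<open>0 < d\<close> \<open>d \<le> \<delta>\<close> \<open>d * K < 1\<close> show ?thesis
    by (rule that)
qed

lemma linear_ode_near_identity:
  fixes Y :: "real \<Rightarrow> ('v::banach \<Rightarrow>\<^sub>L 'v)"
  assumes "0 < \<delta>" and Y_cont: "continuous_on {-\<delta>..\<delta>} Y"
    and Y_bound: "\<And>t. t \<in> {-\<delta>..\<delta>} \<Longrightarrow> norm (Y t) \<le> K"
  obtains \<epsilon> H where "0 < \<epsilon>" "\<epsilon> \<le> \<delta>" "2 * K * \<epsilon> < 1" "H 0 = id_blinfun"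
    "\<And>t. t \<in> {-\<epsilon>..\<epsilon>} \<Longrightarrow> (H has_vector_derivative H t o\<^sub>L Y t) (at t)"
    "\<And>t. t \<in> {-\<epsilon>..\<epsilon>} \<Longrightarrow> norm (H t - id_blinfun) \<le> 1/2"
proof -
  obtain d H where "0 < d" "d \<le> \<delta>" "d * K < 1" "H 0 = id_blinfun"
    and H': "\<And>t. t \<in> {-d<..<d} \<Longrightarrow> (H has_vector_derivative H t o\<^sub>L Y t) (at t)"
    by (rule linear_ode_local_solution[OF assms]) blast+
  have "0 \<le> K" using Y_bound[of 0] \<open>0 < \<delta>\<close> by (auto intro: order_trans[OF norm_ge_zero])
  have "continuous_on {-d/2..d/2} H"
    using H' \<open>0 < d\<close>
    by (intro continuous_at_imp_continuous_on ballI has_vector_derivative_continuous[OF H']) auto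
  then obtain BH where "0 \<le> BH" and BH: "\<And>t. t \<in> {-d/2..d/2} \<Longrightarrow> norm (H t) \<le> BH"
    using continuous_on_compact_bound[OF compact_Icc] by blast
  define \<epsilon> where "\<epsilon> = min (d/2) (1 / (2 * (BH * K + 1)))"
  have "0 \<le> BH * K" using \<open>0 \<le> BH\<close> \<open>0 \<le> K\<close> by simp
  then have "0 < \<epsilon>" "\<epsilon> \<le> d/2" using \<open>0 < d\<close> by (auto simp: \<epsilon>_def)
  have "\<epsilon> * (BH * K) \<le> 1 / (2 * (BH * K + 1)) * (BH * K)"
    using \<open>0 \<le> BH * K\<close> by (intro mult_right_mono) (auto simp: \<epsilon>_def)
  also have "\<dots> \<le> 1/2"
    using \<open>0 \<le> BH * K\<close> by (auto simp: field_simps simp del: mult_nonneg_nonneg)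
  finally have "\<epsilon> * (BH * K) \<le> 1/2" .
  have sub: "{-\<epsilon>..\<epsilon>} \<subseteq> {-d/2..d/2}" "{-\<epsilon>..\<epsilon>} \<subseteq> {-d<..<d}"
    using \<open>\<epsilon> \<le> d/2\<close> \<open>0 < d\<close> by auto
  have "norm (H t - id_blinfun) \<le> 1/2" if "t \<in> {-\<epsilon>..\<epsilon>}" for t
  proof -
    have "norm (H t - H 0) \<le> BH * K * \<bar>t - 0\<bar>"
    proof (rule vector_differentiable_bound[where S="{-\<epsilon>..\<epsilon>}"])
      show "(H has_vector_derivative H s o\<^sub>L Y s) (at s within {-\<epsilon>..\<epsilon>})" if "s \<in> {-\<epsilon>..\<epsilon>}" for s
        using H' sub that by (blast intro: has_vector_derivative_at_within)
      show "norm (H s o\<^sub>L Y s) \<le> BH * K" if "s \<in> {-\<epsilon>..\<epsilon>}" for s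
        using BH Y_bound sub that \<open>0 \<le> BH\<close> \<open>d \<le> \<delta>\<close>
        by (intro order_trans[OF norm_blinfun_compose] mult_mono) auto
    qed (use that \<open>0 < \<epsilon>\<close> in auto)
    also have "\<dots> \<le> BH * K * \<epsilon>"
      using that \<open>0 \<le> BH * K\<close> by (intro mult_left_mono) auto
    finally show ?thesis
      using \<open>H 0 = id_blinfun\<close> \<open>\<epsilon> * (BH * K) \<le> 1/2\<close> by (simp add: ac_simps)
  qed
  moreover have "2 * K * \<epsilon> < 1"
    using \<open>\<epsilon> \<le> d/2\<close> \<open>0 \<le> K\<close> \<open>d * K < 1\<close> mult_left_mono[of \<epsilon> "d/2" K] by (simp add: algebra_simps)
  ultimately show ?thesis
    using that \<open>0 < \<epsilon>\<close> \<open>\<epsilon> \<le> d/2\<close> \<open>d \<le> \<delta>\<close> \<open>H 0 = id_blinfun\<close> H' sub by auto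
qed

lemma C1_differentiable_on_linear_ode:
  fixes Y :: "real \<Rightarrow> ('v::real_normed_vector \<Rightarrow>\<^sub>L 'v)"
  assumes H': "\<And>t. t \<in> S \<Longrightarrow> (H has_vector_derivative H t o\<^sub>L Y t) (at t)" and "continuous_on S Y"
  shows "H C1_differentiable_on S"
  unfolding C1_differentiable_on_def
proof (intro exI conjI ballI)
  show "(H has_vector_derivative H t o\<^sub>L Y t) (at t)" if "t \<in> S" for t
    using H' that .
  have "continuous_on S H"
    using H' by (intro continuous_at_imp_continuous_on ballI has_vector_derivative_continuous[OF H'])
  then show "continuous_on S (\<lambda>t. H t o\<^sub>L Y t)"
    using \<open>continuous_on S Y\<close> by (intro continuous_intros)
qed

theorem mainTheorem13:
  fixes h :: "('a::{real_normed_algebra,banach}) cochain2 \<Rightarrow> 'a cochain1"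
    and g :: "'a cochain3 \<Rightarrow> 'a cochain2"
  assumes "bounded_linear h" and "bounded_linear g"
    and "\<forall>\<alpha>. hoch_b1 (h \<alpha>) + g (hoch_b2 \<alpha>) = \<alpha>"
    and "C1_deformation I m"
  shows "\<exists>\<epsilon>>0. {-\<epsilon><..<\<epsilon>} \<subseteq> I \<and>
           (\<exists>H :: real \<Rightarrow> 'a cochain1.
              H C1_differentiable_on {-\<epsilon><..<\<epsilon>} \<and> H 0 = id_blinfun \<and>
              (\<forall>t. \<bar>t\<bar> < \<epsilon> \<longrightarrow>
                 bij (blinfun_apply (H t)) \<and>
                 (\<forall>x y. H t (m t x y) = H t x * H t y)))"
proof -
  have "open I" "0 \<in> I" and assoc: "\<forall>t\<in>I. \<forall>x y z. m t (m t x y) z = m t x (m t y z)"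
    and m0: "\<And>x y. m 0 x y = x * y" and "m C1_differentiable_on I"
    using assms(4) by (auto simp: C1_deformation_def)
  interpret hochschild_homotopy h g "m 0"
    using assms(1-3) by (intro hochschild_homotopy.intro)
      (simp_all add: hoch_b1_wrt_mult[OF m0] hoch_b2_wrt_mult[OF m0])
  obtain \<delta> Y where "0 < \<delta>" "{-\<delta>..\<delta>} \<subseteq> I" and Y: "continuous_on {-\<delta>..\<delta>} Y"
    and m': "\<And>t. t \<in> {-\<delta>..\<delta>} \<Longrightarrow> (m has_vector_derivative hoch_b1_wrt (m t) (Y t)) (at t)"
    by (rule velocity_is_coboundary[OF \<open>open I\<close> \<open>0 \<in> I\<close> assoc \<open>m C1_differentiable_on I\<close> refl]) blast
  obtain K where K: "\<And>t. t \<in> {-\<delta>..\<delta>} \<Longrightarrow> norm (Y t) \<le> K"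
    using continuous_on_compact_bound[OF compact_Icc Y] by blast
  obtain \<epsilon> H where "0 < \<epsilon>" "\<epsilon> \<le> \<delta>" "2 * K * \<epsilon> < 1" "H 0 = id_blinfun"
    and H': "\<And>t. t \<in> {-\<epsilon>..\<epsilon>} \<Longrightarrow> (H has_vector_derivative H t o\<^sub>L Y t) (at t)"
    and near_id: "\<And>t. t \<in> {-\<epsilon>..\<epsilon>} \<Longrightarrow> norm (H t - id_blinfun) \<le> 1/2"
    by (rule linear_ode_near_identity[OF \<open>0 < \<delta>\<close> Y K]) blast+
  have sub: "{-\<epsilon><..<\<epsilon>} \<subseteq> {-\<epsilon>..\<epsilon>}" "{-\<epsilon>..\<epsilon>} \<subseteq> {-\<delta>..\<delta>}" using \<open>\<epsilon> \<le> \<delta>\<close> by auto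
  have "H t (m t x y) = H t x * H t y" if "t \<in> {-\<epsilon>..\<epsilon>}" for t x y
    by (rule transport_is_homomorphism[where K=K and Y=Y, OF \<open>2 * K * \<epsilon> < 1\<close>])
      (use H' m' K sub \<open>H 0 = id_blinfun\<close> m0 that in \<open>auto intro: has_vector_derivative_at_within\<close>)
  moreover have "bij (blinfun_apply (H t))" if "t \<in> {-\<epsilon>..\<epsilon>}" for t
    using near_id[OF that] by (intro bij_blinfun_near_id) simp
  moreover have "H C1_differentiable_on {-\<epsilon><..<\<epsilon>}"
  proof (rule C1_differentiable_on_linear_ode[where Y=Y])
    show "(H has_vector_derivative H t o\<^sub>L Y t) (at t)" if "t \<in> {-\<epsilon><..<\<epsilon>}" for t
      using H' sub that by blast
    show "continuous_on {-\<epsilon><..<\<epsilon>} Y"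
      using continuous_on_subset[OF Y] sub by blast
  qed
  ultimately show ?thesis
    using \<open>0 < \<epsilon>\<close> \<open>H 0 = id_blinfun\<close> \<open>{-\<delta>..\<delta>} \<subseteq> I\<close> sub
    by (intro exI[of _ \<epsilon>] conjI exI[of _ H] allI impI) (auto simp: abs_less_iff)
qed

end
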